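(* Let $L$ be a bounded lattice, $k\in\mathbb{N}^*$, and $\otimes$ a t-norm on $L$ that is both $\wedge$-distributive and $\vee$-distributive and such that $\langle L,\otimes\rangle$ is divisible. A function $F:L^2\to L$ is $\otimes^k$-homogeneous, has $1_L$ as neutral element, and satisfies $F(x,y)=F(x\wedge y,x\vee y)$ for all $x,y\in L$ if and only if $$F(x,y)=(x\wedge y)\otimes(x\vee y)_\otimes^{(k-1)}\quad\text{for all }x,y\in L.$$
   Context: A t-norm on $L$ is a commutative, associative map $L^2\to L$, non-decreasing in each argument, with neutral element $1_L$. It is $\wedge$-distributive if $x\otimes(y\wedge z)=(x\otimes y)\wedge(x\otimes z)$ and $\vee$-distributive if $x\otimes(y\vee z)=(x\otimes y)\vee(x\otimes z)$, for all $x,y,z$. $\langle L,\otimes\rangle$ is divisible if for all $x,y$ with $y\le_Lx$ there is $z$ with $y=x\otimes z$. Powers: $\lambda_\otimes^{(0)}=1_L$, $\lambda_\otimes^{(1)}=\lambda$, $\lambda_\otimes^{(m)}=\lambda\otimes\lambda_\otimes^{(m-1)}$ for $m\ge2$. $F:L^2\to L$ is $\otimes^k$-homogeneous if $F(\lambda\otimes x,\lambda\otimes y)=\lambda_\otimes^{(k)}\otimes F(x,y)$ for all $\lambda,x,y\in L$. $1_L$ is a neutral element of $F$ if $F(x,1_L)=F(1_L,x)=x$ for all $x$. *)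

theory Defs
  imports Main
begin

definition is_tnorm :: "('a::bounded_lattice \<Rightarrow> 'a \<Rightarrow> 'a) \<Rightarrow> bool" where
  "is_tnorm T \<longleftrightarrow>
     (\<forall>x y. T x y = T y x) \<and>
     (\<forall>x y z. T x (T y z) = T (T x y) z) \<and>
     (\<forall>x y z. y \<le> z \<longrightarrow> T x y \<le> T x z) \<and>
     (\<forall>x y z. x \<le> y \<longrightarrow> T x z \<le> T y z) \<and>
     (\<forall>x. T x top = x)"

definition inf_distributive :: "('a::bounded_lattice \<Rightarrow> 'a \<Rightarrow> 'a) \<Rightarrow> bool" where
  "inf_distributive T \<longleftrightarrow> (\<forall>x y z. T x (inf y z) = inf (T x y) (T x z))"

definition sup_distributive :: "('a::bounded_lattice \<Rightarrow> 'a \<Rightarrow> 'a) \<Rightarrow> bool" where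
  "sup_distributive T \<longleftrightarrow> (\<forall>x y z. T x (sup y z) = sup (T x y) (T x z))"

definition divisible :: "('a::bounded_lattice \<Rightarrow> 'a \<Rightarrow> 'a) \<Rightarrow> bool" where
  "divisible T \<longleftrightarrow> (\<forall>x y. y \<le> x \<longrightarrow> (\<exists>z. y = T x z))"

text \<open>Powers: tpow T l 0 = top, tpow T l (Suc m) = T l (tpow T l m); this agrees with the
  paper's convention (power 1 = l since l (x) top = l).\<close>
fun tpow :: "('a::bounded_lattice \<Rightarrow> 'a \<Rightarrow> 'a) \<Rightarrow> 'a \<Rightarrow> nat \<Rightarrow> 'a" where
  "tpow T l 0 = top"
| "tpow T l (Suc m) = T l (tpow T l m)"

definition homogeneous :: "('a::bounded_lattice \<Rightarrow> 'a \<Rightarrow> 'a) \<Rightarrow> nat \<Rightarrow> ('a \<Rightarrow> 'a \<Rightarrow> 'a) \<Rightarrow> bool" where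
  "homogeneous T k F \<longleftrightarrow> (\<forall>l x y. F (T l x) (T l y) = T (tpow T l k) (F x y))"

definition neutral_top :: "('a::bounded_lattice \<Rightarrow> 'a \<Rightarrow> 'a) \<Rightarrow> bool" where
  "neutral_top F \<longleftrightarrow> (\<forall>x. F x top = x \<and> F top x = x)"

end

theory Submission
  imports Defs
begin

text \<open>Divisibility writes x \<sqinter> y = (x \<squnion> y) \<otimes> z. Homogeneity with \<lambda> = x \<squnion> y, applied to the
  pair (z, 1), and neutrality of 1 then force F(x, y) = (x \<squnion> y)^k \<otimes> z = (x \<sqinter> y) \<otimes> (x \<squnion> y)^(k-1).
  Conversely, by the two distributivity laws \<lambda> \<otimes> - commutes with \<sqinter> and \<squnion>, and powers are
  multiplicative, so the formula is homogeneous.\<close>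

lemma tnorm_commute: "is_tnorm T \<Longrightarrow> T x y = T y x"
  unfolding is_tnorm_def by blast

lemma tnorm_assoc: "is_tnorm T \<Longrightarrow> T (T x y) z = T x (T y z)"
  unfolding is_tnorm_def by metis

lemma tnorm_top_right: "is_tnorm T \<Longrightarrow> T x top = x"
  unfolding is_tnorm_def by blast

lemma tnorm_left_commute:
  assumes "is_tnorm T"
  shows "T x (T y z) = T y (T x z)"
proof -
  have "T x (T y z) = T (T y x) z"
    by (simp only: tnorm_assoc[OF assms, symmetric] tnorm_commute[OF assms, of x y])
  then show ?thesis
    by (simp only: tnorm_assoc[OF assms])
qed

lemma tpow_top: "is_tnorm T \<Longrightarrow> tpow T top m = top"
  by (induction m) (simp_all add: tnorm_top_right)

lemma tpow_tnorm:
  assumes "is_tnorm T"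
  shows "tpow T (T l x) m = T (tpow T l m) (tpow T x m)"
proof (induction m)
  case 0
  then show ?case using tnorm_top_right[OF assms] by simp
next
  case (Suc m)
  have "tpow T (T l x) (Suc m) = T (T l x) (T (tpow T l m) (tpow T x m))"
    using Suc by simp
  also have "\<dots> = T (T l (tpow T l m)) (T x (tpow T x m))"
    by (simp only: tnorm_assoc[OF assms] tnorm_left_commute[OF assms, of x])
  finally show ?case by simp
qed

lemma tnorm_tpow_Suc:
  assumes "is_tnorm T"
  shows "T (tpow T l (Suc j)) z = T (T l z) (tpow T l j)"
  using tnorm_assoc[OF assms] tnorm_commute[OF assms] by (metis tpow.simps(2))

lemma homogeneous_neutral_imp_tpow_formula:
  assumes T: "is_tnorm T" and div: "divisible T"
    and hom: "homogeneous T (Suc j) F" and neutral: "neutral_top F"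
    and sym: "\<And>x y. F x y = F (inf x y) (sup x y)"
  shows "F x y = T (inf x y) (tpow T (sup x y) j)"
proof -
  have "inf x y \<le> sup x y"
    by (meson inf_le1 le_supI1)
  then obtain z where z: "inf x y = T (sup x y) z"
    using div unfolding divisible_def by blast
  have "F x y = F (inf x y) (sup x y)"
    by (rule sym)
  also have "\<dots> = F (T (sup x y) z) (T (sup x y) top)"
    using z tnorm_top_right[OF T] by simp
  also have "\<dots> = T (tpow T (sup x y) (Suc j)) (F z top)"
    using hom unfolding homogeneous_def by blast
  also have "\<dots> = T (tpow T (sup x y) (Suc j)) z"
    using neutral unfolding neutral_top_def by simp
  also have "\<dots> = T (inf x y) (tpow T (sup x y) j)"
    using z tnorm_tpow_Suc[OF T] by simp
  finally show ?thesis .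
qed

lemma tpow_formula_homogeneous:
  assumes T: "is_tnorm T" and "inf_distributive T" and "sup_distributive T"
  shows "homogeneous T (Suc j) (\<lambda>x y. T (inf x y) (tpow T (sup x y) j))"
  unfolding homogeneous_def
proof (intro allI)
  fix l x y
  have "inf (T l x) (T l y) = T l (inf x y)" and "sup (T l x) (T l y) = T l (sup x y)"
    using assms(2,3) unfolding inf_distributive_def sup_distributive_def by simp_all
  then have "T (inf (T l x) (T l y)) (tpow T (sup (T l x) (T l y)) j)
      = T (T l (inf x y)) (T (tpow T l j) (tpow T (sup x y) j))"
    by (simp only: tpow_tnorm[OF T])
  also have "\<dots> = T (tpow T l (Suc j)) (T (inf x y) (tpow T (sup x y) j))"
    by (simp only: tpow.simps tnorm_assoc[OF T]
        tnorm_left_commute[OF T, of "inf x y" "tpow T l j"])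
  finally show "T (inf (T l x) (T l y)) (tpow T (sup (T l x) (T l y)) j)
      = T (tpow T l (Suc j)) (T (inf x y) (tpow T (sup x y) j))" .
qed

lemma tpow_formula_neutral_top:
  assumes "is_tnorm T"
  shows "neutral_top (\<lambda>x y. T (inf x y) (tpow T (sup x y) j))"
  unfolding neutral_top_def using assms by (simp add: tpow_top tnorm_top_right)

theorem mainTheorem12:
  fixes T :: "'a::bounded_lattice \<Rightarrow> 'a \<Rightarrow> 'a" and F :: "'a \<Rightarrow> 'a \<Rightarrow> 'a" and k :: nat
  assumes "k \<ge> 1"
    and "is_tnorm T" and "inf_distributive T" and "sup_distributive T" and "divisible T"
  shows "(homogeneous T k F \<and> neutral_top F \<and> (\<forall>x y. F x y = F (inf x y) (sup x y)))
     \<longleftrightarrow> (\<forall>x y. F x y = T (inf x y) (tpow T (sup x y) (k - 1)))"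
proof -
  obtain j where k: "k = Suc j"
    using assms(1) by (cases k) auto
  show ?thesis
  proof
    assume "homogeneous T k F \<and> neutral_top F \<and> (\<forall>x y. F x y = F (inf x y) (sup x y))"
    then have "F x y = T (inf x y) (tpow T (sup x y) j)" for x y
      using homogeneous_neutral_imp_tpow_formula[OF assms(2,5), of j F] k by blast
    then show "\<forall>x y. F x y = T (inf x y) (tpow T (sup x y) (k - 1))"
      using k by simp
  next
    assume "\<forall>x y. F x y = T (inf x y) (tpow T (sup x y) (k - 1))"
    then have F: "F = (\<lambda>x y. T (inf x y) (tpow T (sup x y) j))"
      using k by auto
    show "homogeneous T k F \<and> neutral_top F \<and> (\<forall>x y. F x y = F (inf x y) (sup x y))"
      unfolding F k
      using tpow_formula_homogeneous[OF assms(2-4)] tpow_formula_neutral_top[OF assms(2)]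
      by (simp add: inf_absorb1 sup_absorb2 le_supI1)
  qed
qed

end
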